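(* Let $f=\prod_{i=1}^n(y-a_i)\in\overline K[y]$ be reduced ($a_i$ pairwise distinct), of degree $n\ge2$. Let $w=\sum_{i=1}^nw_i\varepsilon_i\in\overline{\mathcal F}$. Then every solution $(u,v)\in\overline{\mathcal E}\times\overline{\mathcal E}$, $u=\sum_iu_i\varepsilon_i$, of $uf'_x+vf'_y=wf$ satisfies $v=\sum_{i=1}^nu_ia'_i\varepsilon_i$ and, for $1\le i\le n$, $$w_i=\Bigl(\sum_{j\ne i}\frac{a'_i-a'_j}{a_i-a_j}\Bigr)u_i-\sum_{j\neq i}\frac{a'_i-a'_j}{a_i-a_j}\,u_j.$$
   Context: $\overline K=\bigcup_{d\ge1}\mathbf C[[x^{1/d}]][1/x]$, $'$ denotes $d/dx$ and $f'_x,f'_y$ partial derivatives (coefficientwise in $x$). $\overline{\mathcal E}$ is the $\overline K$-space of polynomials in $y$ of degree $<n$, with basis $\varepsilon_i=\prod_{j\ne i}(y-a_j)$; $\overline{\mathcal F}=\{\sum u_i\varepsilon_i:\sum u_i=0\}$, the polynomials of degree $<n-1$. *)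

theory Defs
  imports "HOL-Computational_Algebra.Polynomial" "HOL-Computational_Algebra.Formal_Laurent_Series"
begin

text \<open>Puiseux field representation: a finite family of elements of
  the union over d of C((x^(1/d))) lies in a single C((t)) with t = x^(1/d).
  The derivative d/dx on C((t)), t^d = x, is (1/d) t^(1-d) d/dt.\<close>
definition xderiv :: "nat \<Rightarrow> complex fls \<Rightarrow> complex fls" where
  "xderiv d g = fls_const (1 / of_nat d) * fls_X_intpow (1 - int d) * fls_deriv g"

definition pderiv_x :: "nat \<Rightarrow> complex fls poly \<Rightarrow> complex fls poly" where
  "pderiv_x d p = map_poly (xderiv d) p"

definition redpoly :: "nat \<Rightarrow> (nat \<Rightarrow> complex fls) \<Rightarrow> complex fls poly" where
  "redpoly n a = (\<Prod>i<n. [:- a i, 1:])"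

definition eps :: "nat \<Rightarrow> (nat \<Rightarrow> complex fls) \<Rightarrow> nat \<Rightarrow> complex fls poly" where
  "eps n a i = (\<Prod>j\<in>{..<n} - {i}. [:- a j, 1:])"

end

theory Submission
  imports Defs
begin

text \<open>Write \<open>\<epsilon>\<^sub>i = f / (y - a\<^sub>i)\<close>. Then \<open>f'\<^sub>y = \<Sum> \<epsilon>\<^sub>i\<close> and \<open>f'\<^sub>x = - \<Sum> a'\<^sub>i \<epsilon>\<^sub>i\<close>, and at a root
  \<open>a\<^sub>k\<close> both \<open>f\<close> and every \<open>\<epsilon>\<^sub>i\<close> with \<open>i \<noteq> k\<close> vanish. Evaluating the equation at \<open>a\<^sub>k\<close>
  therefore gives \<open>v(a\<^sub>k) = u\<^sub>k a'\<^sub>k \<epsilon>\<^sub>k(a\<^sub>k)\<close>, which determines \<open>v\<close> by interpolation. With this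
  \<open>v\<close>, the left-hand side becomes \<open>\<Sum>\<^sub>i\<^sub>\<noteq>\<^sub>j u\<^sub>i (a'\<^sub>i - a'\<^sub>j) \<epsilon>\<^sub>i \<epsilon>\<^sub>j\<close>, and \<open>\<epsilon>\<^sub>i \<epsilon>\<^sub>j = f \<cdot> f / ((y - a\<^sub>i)(y - a\<^sub>j))\<close>
  for \<open>i \<noteq> j\<close>, so \<open>f\<close> can be cancelled; evaluating the quotient at \<open>a\<^sub>k\<close> gives \<open>w\<^sub>k\<close>.\<close>

lemma xderiv_zero [simp]: "xderiv d 0 = 0"
  by (simp add: xderiv_def)

lemma xderiv_one [simp]: "xderiv d 1 = 0"
  by (simp add: xderiv_def)

lemma xderiv_minus: "xderiv d (- f) = - xderiv d f"
  by (simp add: xderiv_def)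

lemma xderiv_mult: "xderiv d (f * g) = xderiv d f * g + f * xderiv d g"
  by (simp add: xderiv_def algebra_simps)

lemma xderiv_sum: "xderiv d (sum f S) = (\<Sum>i\<in>S. xderiv d (f i))"
  by (simp add: xderiv_def fls_deriv_sum sum_distrib_left)

lemma coeff_pderiv_x: "coeff (pderiv_x d p) k = xderiv d (coeff p k)"
  by (simp add: pderiv_x_def coeff_map_poly)

lemma pderiv_x_one [simp]: "pderiv_x d 1 = 0"
  by (rule poly_eqI) (simp add: coeff_pderiv_x coeff_1)

lemma pderiv_x_mult: "pderiv_x d (p * q) = pderiv_x d p * q + p * pderiv_x d q"
  by (rule poly_eqI)
    (simp add: coeff_pderiv_x coeff_mult xderiv_sum xderiv_mult sum.distrib)

lemma pderiv_x_prod: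
  "pderiv_x d (prod f A) = (\<Sum>x\<in>A. prod f (A - {x}) * pderiv_x d (f x))"
proof (induction A rule: infinite_finite_induct)
  case (insert x A)
  have "prod f (insert x A - {y}) = f x * prod f (A - {y})" if "y \<in> A" for y
  proof -
    have "insert x A - {y} = insert x (A - {y})"
      using insert.hyps(2) that by auto
    then show ?thesis
      using insert.hyps by simp
  qed
  then show ?case
    using insert.hyps
    by (simp add: pderiv_x_mult insert.IH sum_distrib_left ac_simps cong: sum.cong)
qed auto

lemma pderiv_x_linear: "pderiv_x d [:- c, 1:] = [:- xderiv d c:]"
  by (rule poly_eqI) (simp add: coeff_pderiv_x coeff_pCons xderiv_minus split: nat.split)

definition eps2 :: "nat \<Rightarrow> (nat \<Rightarrow> complex fls) \<Rightarrow> nat \<Rightarrow> nat \<Rightarrow> complex fls poly" where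
  "eps2 n a i j = (\<Prod>k\<in>{..<n} - {i, j}. [:- a k, 1:])"

lemma eps2_commute: "eps2 n a i j = eps2 n a j i"
  by (simp add: eps2_def insert_commute)

lemma redpoly_eq_mult_eps: "i < n \<Longrightarrow> redpoly n a = [:- a i, 1:] * eps n a i"
  unfolding redpoly_def eps_def by (simp add: prod.remove)

lemma eps_eq_mult_eps2:
  assumes "j < n" "j \<noteq> i"
  shows "eps n a i = [:- a j, 1:] * eps2 n a i j"
proof -
  have "{..<n} - {i, j} = {..<n} - {i} - {j}"
    by auto
  then show ?thesis
    unfolding eps_def eps2_def using assms by (simp add: prod.remove)
qed

lemma eps_mult_eps:
  assumes "i < n" "j < n" "j \<noteq> i"
  shows "eps n a i * eps n a j = redpoly n a * eps2 n a i j"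
proof -
  have "eps n a i = [:- a j, 1:] * eps2 n a i j" "eps n a j = [:- a i, 1:] * eps2 n a i j"
    using eps_eq_mult_eps2[OF assms(2,3)] eps_eq_mult_eps2[of i n j a] assms
    by (simp_all add: eps2_commute)
  moreover have "redpoly n a = [:- a i, 1:] * ([:- a j, 1:] * eps2 n a i j)"
    using redpoly_eq_mult_eps[OF assms(1)] calculation(1) by simp
  ultimately show ?thesis
    by (simp only: ac_simps)
qed

lemma redpoly_nonzero: "redpoly n a \<noteq> 0"
  unfolding redpoly_def by (auto simp: prod_zero_iff)

lemma poly_redpoly_root: "k < n \<Longrightarrow> poly (redpoly n a) (a k) = 0"
  by (simp add: redpoly_eq_mult_eps)

lemma poly_eps_root: "i < n \<Longrightarrow> k < n \<Longrightarrow> k \<noteq> i \<Longrightarrow> poly (eps n a i) (a k) = 0"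
  unfolding eps_def poly_prod by (rule prod_zero) auto

lemma poly_eps2_root: "k < n \<Longrightarrow> k \<noteq> i \<Longrightarrow> k \<noteq> j \<Longrightarrow> poly (eps2 n a i j) (a k) = 0"
  unfolding eps2_def poly_prod by (rule prod_zero) auto

lemma poly_eps_self_nonzero: "inj_on a {..<n} \<Longrightarrow> k < n \<Longrightarrow> poly (eps n a k) (a k) \<noteq> 0"
  unfolding eps_def poly_prod by (auto simp: prod_zero_iff inj_on_eq_iff)

lemma poly_eps2_self:
  assumes "inj_on a {..<n}" "k < n" "j < n" "j \<noteq> k"
  shows "poly (eps2 n a k j) (a k) = poly (eps n a k) (a k) / (a k - a j)"
proof -
  have "a k - a j \<noteq> 0"
    using assms by (auto dest: inj_onD)
  moreover have "poly (eps n a k) (a k) = (a k - a j) * poly (eps2 n a k j) (a k)"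
    using eps_eq_mult_eps2[OF assms(3,4), of a] by (simp only: poly_mult) simp
  ultimately show ?thesis
    by (simp add: field_simps)
qed

lemma degree_eps_le: "i < n \<Longrightarrow> degree (eps n a i) \<le> n - 1"
  unfolding eps_def using degree_prod_sum_le[of "{..<n} - {i}" "\<lambda>j. [:- a j, 1:]"]
  by simp

lemma degree_eps_comb_less: "0 < n \<Longrightarrow> degree (\<Sum>i<n. smult (c i) (eps n a i)) < n"
  using degree_sum_le[of "{..<n}" "\<lambda>i. smult (c i) (eps n a i)" "n - 1"]
    degree_smult_le degree_eps_le order.trans
  by fastforce

lemma poly_eps_comb:
  assumes "k < n"
  shows "poly (\<Sum>i<n. smult (c i) (eps n a i)) (a k) = c k * poly (eps n a k) (a k)"
  unfolding poly_sum using assms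
  by (simp add: sum.remove[of _ k] poly_eps_root sum.neutral)

lemma eps_comb_eqI:
  assumes inj: "inj_on a {..<n}" and deg: "degree p < n"
    and at_roots: "\<And>k. k < n \<Longrightarrow> poly p (a k) = c k * poly (eps n a k) (a k)"
  shows "p = (\<Sum>i<n. smult (c i) (eps n a i))"
proof (rule poly_eqI_degree[where A = "a ` {..<n}"])
  show "card (a ` {..<n}) > degree p" "card (a ` {..<n}) > degree (\<Sum>i<n. smult (c i) (eps n a i))"
    using deg degree_eps_comb_less[of n] by (simp_all add: card_image[OF inj])
qed (use at_roots poly_eps_comb in auto)

lemma pderiv_redpoly: "pderiv (redpoly n a) = (\<Sum>i<n. eps n a i)"
  unfolding redpoly_def pderiv_prod by (simp add: eps_def pderiv_pCons)

lemma pderiv_x_redpoly: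
  "pderiv_x d (redpoly n a) = (\<Sum>i<n. smult (- xderiv d (a i)) (eps n a i))"
  unfolding redpoly_def pderiv_x_prod by (simp add: eps_def pderiv_x_linear)

lemma eps_comb_mult_identity:
  "(\<Sum>i<n. smult (u i) (eps n a i)) * (\<Sum>i<n. smult (- b i) (eps n a i))
     + (\<Sum>i<n. smult (u i * b i) (eps n a i)) * (\<Sum>i<n. eps n a i)
   = redpoly n a * (\<Sum>i<n. \<Sum>j\<in>{..<n} - {i}. smult (u i * (b i - b j)) (eps2 n a i j))"
proof -
  have "(\<Sum>i<n. smult (u i) (eps n a i)) * (\<Sum>i<n. smult (- b i) (eps n a i))
      + (\<Sum>i<n. smult (u i * b i) (eps n a i)) * (\<Sum>i<n. eps n a i)
      = (\<Sum>i<n. \<Sum>j<n. smult (u i * (b i - b j)) (eps n a i * eps n a j))"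
    unfolding sum_product sum.distrib[symmetric]
    by (intro sum.cong refl) (simp add: algebra_simps smult_add_left[symmetric])
  also have "\<dots> = (\<Sum>i<n. \<Sum>j\<in>{..<n} - {i}. smult (u i * (b i - b j)) (eps n a i * eps n a j))"
    by (simp add: sum_diff1)
  also have "\<dots> = (\<Sum>i<n. \<Sum>j\<in>{..<n} - {i}. smult (u i * (b i - b j)) (redpoly n a * eps2 n a i j))"
    by (intro sum.cong refl) (simp add: eps_mult_eps)
  finally show ?thesis
    by (simp add: sum_distrib_left)
qed

lemma poly_eps2_comb:
  assumes inj: "inj_on a {..<n}" and k: "k < n"
  shows "poly (\<Sum>i<n. \<Sum>j\<in>{..<n} - {i}. smult (c i j) (eps2 n a i j)) (a k)
       = poly (eps n a k) (a k) * (\<Sum>j\<in>{..<n} - {k}. (c k j + c j k) / (a k - a j))"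
proof -
  define P where "P i j = c i j * poly (eps2 n a i j) (a k)" for i j
  have only_k: "(\<Sum>j\<in>{..<n} - {i}. P i j) = P i k" if "i \<in> {..<n} - {k}" for i
    using that k by (simp add: sum.remove[of _ k] P_def poly_eps2_root sum.neutral)
  have "poly (\<Sum>i<n. \<Sum>j\<in>{..<n} - {i}. smult (c i j) (eps2 n a i j)) (a k)
      = (\<Sum>j\<in>{..<n} - {k}. P k j) + (\<Sum>i\<in>{..<n} - {k}. \<Sum>j\<in>{..<n} - {i}. P i j)"
    using k by (simp add: poly_sum P_def sum.remove[of _ k])
  also have "\<dots> = (\<Sum>j\<in>{..<n} - {k}. P k j + P j k)"
    by (simp add: only_k sum.distrib)
  also have "\<dots> = (\<Sum>j\<in>{..<n} - {k}. poly (eps n a k) (a k) * ((c k j + c j k) / (a k - a j)))"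
    using inj k
    by (intro sum.cong refl)
      (auto simp: P_def poly_eps2_self eps2_commute[of n a _ k] divide_inverse algebra_simps)
  finally show ?thesis
    by (simp add: sum_distrib_left)
qed

lemma eps_solution_v:
  assumes inj: "inj_on a {..<n}" and deg: "degree v < n"
    and eq: "(\<Sum>i<n. smult (u i) (eps n a i)) * (\<Sum>i<n. smult (- b i) (eps n a i))
             + v * (\<Sum>i<n. eps n a i) = W * redpoly n a"
  shows "v = (\<Sum>i<n. smult (u i * b i) (eps n a i))"
proof (rule eps_comb_eqI[OF inj deg])
  fix k assume k: "k < n"
  let ?e = "poly (eps n a k) (a k)"
  have "poly (\<Sum>i<n. eps n a i) (a k) = ?e"
    using poly_eps_comb[OF k, of "\<lambda>_. 1" a] by simp
  moreover have "poly (\<Sum>i<n. smult (- b i) (eps n a i)) (a k) = - b k * ?e"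
    using poly_eps_comb[OF k] .
  ultimately have "(u k * ?e) * (- b k * ?e) + poly v (a k) * ?e = 0"
    using arg_cong[OF eq, of "\<lambda>p. poly p (a k)"] k
    by (simp only: poly_add poly_mult poly_eps_comb poly_redpoly_root) simp
  then have "(poly v (a k) - u k * b k * ?e) * ?e = 0"
    by (simp add: algebra_simps)
  then show "poly v (a k) = (u k * b k) * ?e"
    using poly_eps_self_nonzero[OF inj k] by simp
qed

lemma eps_solution_w:
  assumes inj: "inj_on a {..<n}" and k: "k < n"
    and eq: "(\<Sum>i<n. smult (u i) (eps n a i)) * (\<Sum>i<n. smult (- b i) (eps n a i))
             + (\<Sum>i<n. smult (u i * b i) (eps n a i)) * (\<Sum>i<n. eps n a i)
             = (\<Sum>i<n. smult (w i) (eps n a i)) * redpoly n a"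
  shows "w k = (\<Sum>j\<in>{..<n} - {k}. (b k - b j) / (a k - a j)) * u k
             - (\<Sum>j\<in>{..<n} - {k}. (b k - b j) / (a k - a j) * u j)"
proof -
  let ?e = "poly (eps n a k) (a k)"
  have "(\<Sum>i<n. smult (w i) (eps n a i))
      = (\<Sum>i<n. \<Sum>j\<in>{..<n} - {i}. smult (u i * (b i - b j)) (eps2 n a i j))"
    using eq[unfolded eps_comb_mult_identity] redpoly_nonzero[of n a]
    by (simp add: mult.commute)
  from arg_cong[OF this, of "\<lambda>p. poly p (a k)"]
  have "w k * ?e = ?e * (\<Sum>j\<in>{..<n} - {k}. (u k * (b k - b j) + u j * (b j - b k)) / (a k - a j))"
    by (simp add: poly_eps_comb[OF k] poly_eps2_comb[OF inj k])
  then have "w k = (\<Sum>j\<in>{..<n} - {k}. (u k * (b k - b j) + u j * (b j - b k)) / (a k - a j))"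
    using poly_eps_self_nonzero[OF inj k] by simp
  also have "\<dots> = (\<Sum>j\<in>{..<n} - {k}. (b k - b j) / (a k - a j) * u k - (b k - b j) / (a k - a j) * u j)"
    by (intro sum.cong refl) (simp add: diff_divide_distrib add_divide_distrib algebra_simps)
  finally show ?thesis
    by (simp add: sum_subtractf sum_distrib_right)
qed

theorem mainTheorem16:
  fixes d n :: nat and a u w :: "nat \<Rightarrow> complex fls" and v :: "complex fls poly"
  assumes "d \<ge> 1" and "n \<ge> 2"
    and "inj_on a {..<n}"
    and "(\<Sum>i<n. w i) = 0"
    and "degree v < n"
    and "(\<Sum>i<n. smult (u i) (eps n a i)) * pderiv_x d (redpoly n a)
           + v * pderiv (redpoly n a)
         = (\<Sum>i<n. smult (w i) (eps n a i)) * redpoly n a"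
  shows "v = (\<Sum>i<n. smult (u i * xderiv d (a i)) (eps n a i))
    \<and> (\<forall>i<n. w i =
          (\<Sum>j\<in>{..<n} - {i}. (xderiv d (a i) - xderiv d (a j)) / (a i - a j)) * u i
        - (\<Sum>j\<in>{..<n} - {i}. (xderiv d (a i) - xderiv d (a j)) / (a i - a j) * u j))"
proof -
  note eq = assms(6)[unfolded pderiv_x_redpoly pderiv_redpoly]
  have v: "v = (\<Sum>i<n. smult (u i * xderiv d (a i)) (eps n a i))"
    using eps_solution_v[OF assms(3,5) eq] .
  show ?thesis
    using v eps_solution_w[OF assms(3) _ eq[unfolded v]] by blast
qed

end
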